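(* Let $\mathbf H=\mathbf g\mathbf h^T$ with $\mathbf g\in\mathbb C^{M_R}$, $\mathbf h\in\mathbb C^{M_T}$, let $\mathbf\Theta\in\mathbb C^{M_R\times M_T}$ have full rank, and set $\hat{\mathbf H}=\mathbf H\circ\mathbf\Theta$. If $M_R\le M_T$, there exist numbers $\varepsilon_1,\dots,\varepsilon_{M_R}$ with $\min_i|[\mathbf h]_i|^2\le\varepsilon_i\le\max_i|[\mathbf h]_i|^2$ such that $$\det(\hat{\mathbf H}\hat{\mathbf H}^H)=\Big(\prod_{i=1}^{M_R}|[\mathbf g]_i|^2\varepsilon_i\Big)\det(\mathbf\Theta\mathbf\Theta^H).$$ If $M_R\ge M_T$, there exist numbers $\nu_1,\dots,\nu_{M_T}$ with $\min_i|[\mathbf g]_i|^2\le\nu_i\le\max_i|[\mathbf g]_i|^2$ such that $$\det(\hat{\mathbf H}^H\hat{\mathbf H})=\Big(\prod_{i=1}^{M_T}|[\mathbf h]_i|^2\nu_i\Big)\det(\mathbf\Theta^H\mathbf\Theta).$$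
   Context: $\circ$ denotes the Hadamard (entrywise) product; $[\mathbf x]_i$ is the $i$th entry of $\mathbf x$. *)

theory Defs
  imports "HOL-Analysis.Analysis"
begin

definition herm :: "complex^'n^'m \<Rightarrow> complex^'m^'n" where
  "herm A = (\<chi> i j. cnj (A $ j $ i))"

definition hadamard :: "complex^'n^'m \<Rightarrow> complex^'n^'m \<Rightarrow> complex^'n^'m" where
  "hadamard A B = (\<chi> i j. A $ i $ j * B $ i $ j)"

definition outer :: "complex^'m \<Rightarrow> complex^'n \<Rightarrow> complex^'n^'m" where
  "outer g h = (\<chi> i j. g $ i * h $ j)"

end

theory Submission
  imports Defs
begin

(* For an n x m complex matrix X (n = CARD('r) rows) write X_f for the
   n x n matrix whose j-th column is column f(j) of X, for an arbitrary map
   f : rows -> columns (colsel X f below).  Expanding det (X X^H) and symmetrising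
   over permutations of the selected columns gives the Cauchy-Binet-type identity

       n! * det (X X^H) = sum over all f of |det X_f|^2 .

   If Y = (a_i b_j X_ij), then det Y_f = (prod_i a_i) (prod_j b_(f j)) det X_f, so
   the summands for Y are those for X weighted by |prod a|^2 * w_f with
   w_f = prod_j |b_(f j)|^2 lying between (min |b|^2)^n and (max |b|^2)^n.  A
   weighted average of such weights is again of the form t^n with t between
   min |b|^2 and max |b|^2 (an n-th root mean value).  This yields
   det (Y Y^H) = |prod a|^2 t^n det (X X^H), and theorem2 follows by applying this
   once to Theta (rows scaled by g, columns by h) and once to Theta^H (rows scaled by
   cnj h, columns by cnj g), taking all epsilon_i (resp. nu_i) equal to t. *)

lemma herm_herm [simp]: "herm (herm A) = A"
  by (simp add: herm_def vec_eq_iff)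

lemma cnj_det: "cnj (det (A::complex^'n^'n)) = det (\<chi> i j. cnj (A$i$j))"
  by (simp add: det_def cnj_sum cnj_prod)

definition colsel :: "'a^'t^'r \<Rightarrow> ('r \<Rightarrow> 't) \<Rightarrow> 'a^'r^'r" where
  "colsel X f = (\<chi> i j. X$i$(f j))"

lemma det_mult_herm_expand:
  fixes X :: "complex^'t::finite^'r::finite"
  shows "det (X ** herm X) =
    (\<Sum>f\<in>UNIV. (\<Prod>i\<in>UNIV. X$i$(f i)) * cnj (det (colsel X f)))"
proof -
  let ?PU = "{p. p permutes (UNIV::'r set)}"
  have "det (X ** herm X) = (\<Sum>p\<in>?PU. of_int (sign p) *
      (\<Prod>i\<in>UNIV. \<Sum>k\<in>UNIV. X$i$k * cnj (X$(p i)$k)))"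
    by (simp add: det_def matrix_matrix_mult_def herm_def)
  also have "\<dots> = (\<Sum>p\<in>?PU. of_int (sign p) *
      (\<Sum>f\<in>UNIV. \<Prod>i\<in>UNIV. X$i$(f i) * cnj (X$(p i)$(f i))))"
    by (simp add: prod_sum_PiE PiE_UNIV_domain)
  also have "\<dots> = (\<Sum>f\<in>UNIV. (\<Prod>i\<in>UNIV. X$i$(f i)) *
      (\<Sum>p\<in>?PU. of_int (sign p) * (\<Prod>i\<in>UNIV. cnj (X$(p i)$(f i)))))"
    by (simp add: sum_distrib_left prod.distrib mult_ac sum.swap[of _ ?PU])
  also have "\<dots> = (\<Sum>f\<in>UNIV. (\<Prod>i\<in>UNIV. X$i$(f i)) * det (\<chi> i j. cnj (X$j$(f i))))"
    by (simp add: det_def)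
  also have "\<dots> = (\<Sum>f\<in>UNIV. (\<Prod>i\<in>UNIV. X$i$(f i)) * cnj (det (colsel X f)))"
  proof -
    have "cnj (det (colsel X f)) = det (\<chi> i j. cnj (X$j$(f i)))" for f
      unfolding det_transpose[of "colsel X f", symmetric] cnj_det
      by (simp add: colsel_def transpose_def)
    then show ?thesis by simp
  qed
  finally show ?thesis .
qed

text \<open>Cauchy--Binet-type identity: symmetrising the expansion over column
  permutations turns each summand into a squared modulus.\<close>
lemma fact_det_mult_herm:
  fixes X :: "complex^'t::finite^'r::finite"
  shows "of_nat (fact CARD('r)) * det (X ** herm X) =
    (\<Sum>f\<in>UNIV. complex_of_real ((cmod (det (colsel X f)))\<^sup>2))"
proof -
  define P where "P f = (\<Prod>i\<in>UNIV. X$i$(f i))" for f :: "'r \<Rightarrow> 't"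
  define T where "T f = P f * cnj (det (colsel X f))" for f
  let ?PU = "{p. p permutes (UNIV::'r set)}"
  have reindex: "sum T UNIV = (\<Sum>f\<in>UNIV. of_int (sign s) * P (f \<circ> s) * cnj (det (colsel X f)))"
    if s: "s permutes (UNIV::'r set)" for s
  proof -
    have "sum T UNIV = (\<Sum>f\<in>UNIV. T (f \<circ> s))"
      by (rule sum.reindex_bij_witness[where j="\<lambda>f. f \<circ> inv s" and i="\<lambda>f. f \<circ> s"])
         (simp_all add: comp_assoc permutes_inv_o[OF s])
    moreover have "det (colsel X (f \<circ> s)) = of_int (sign s) * det (colsel X f)" for f
      using det_permute_columns[OF s, of "colsel X f"] by (simp add: colsel_def)
    ultimately show ?thesis by (simp add: T_def mult_ac)
  qed
  have det_sym: "(\<Sum>s\<in>?PU. of_int (sign s) * P (f \<circ> s)) = det (colsel X f)" for f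
    by (simp add: det_def colsel_def P_def)
  have "of_nat (card ?PU) * sum T UNIV = (\<Sum>s\<in>?PU. sum T UNIV)" by simp
  also have "\<dots> = (\<Sum>s\<in>?PU. \<Sum>f\<in>UNIV. of_int (sign s) * P (f \<circ> s) * cnj (det (colsel X f)))"
    by (rule sum.cong[OF refl]) (simp add: reindex)
  also have "\<dots> = (\<Sum>f\<in>UNIV. det (colsel X f) * cnj (det (colsel X f)))"
    by (subst sum.swap) (simp add: sum_distrib_right det_sym[symmetric])
  also have "\<dots> = (\<Sum>f\<in>UNIV. complex_of_real ((cmod (det (colsel X f)))\<^sup>2))"
    by (rule sum.cong[OF refl]) (metis complex_norm_square mult.commute)
  finally show ?thesis
    by (simp add: card_permutations det_mult_herm_expand T_def P_def)
qed

lemma det_colsel_scaled: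
  fixes X :: "'a::comm_ring_1^'t::finite^'r::finite" and f :: "'r \<Rightarrow> 't"
  shows "det (colsel (\<chi> i j. a i * b j * X$i$j) f) =
    (\<Prod>i\<in>UNIV. a i) * (\<Prod>j\<in>UNIV. b (f j)) * det (colsel X f)"
proof -
  have "(\<Prod>i\<in>UNIV. a i * b (f (p i)) * X$i$(f (p i))) =
        (\<Prod>i\<in>UNIV. a i) * (\<Prod>j\<in>UNIV. b (f j)) * (\<Prod>i\<in>UNIV. X$i$(f (p i)))"
    if p: "p permutes (UNIV::'r set)" for p
    using prod.permute[OF p, of "\<lambda>j. b (f j)"] by (simp add: o_def prod.distrib)
  then show ?thesis
    by (simp add: det_def colsel_def sum_distrib_left mult_ac)
qed

lemma power_mean_value:
  fixes w c :: "'a \<Rightarrow> real" and m M :: real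
  assumes "finite S" "n > 0" "0 \<le> m" "m \<le> M"
    and w_bounds: "\<And>x. x \<in> S \<Longrightarrow> m ^ n \<le> w x \<and> w x \<le> M ^ n"
    and c_nonneg: "\<And>x. x \<in> S \<Longrightarrow> 0 \<le> c x"
  shows "\<exists>t. m \<le> t \<and> t \<le> M \<and> (\<Sum>x\<in>S. w x * c x) = t ^ n * (\<Sum>x\<in>S. c x)"
proof -
  define R where "R = (\<Sum>x\<in>S. c x)"
  define W where "W = (\<Sum>x\<in>S. w x * c x)"
  have lower: "m ^ n * R \<le> W"
    unfolding R_def W_def sum_distrib_left
    by (intro sum_mono mult_right_mono) (simp_all add: w_bounds c_nonneg)
  have upper: "W \<le> M ^ n * R"
    unfolding R_def W_def sum_distrib_left
    by (intro sum_mono mult_right_mono) (simp_all add: w_bounds c_nonneg)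
  show ?thesis
  proof (cases "R = 0")
    case True
    then show ?thesis using lower upper \<open>m \<le> M\<close> by (auto simp: R_def W_def)
  next
    case False
    then have "R > 0" using c_nonneg by (simp add: R_def order_less_le sum_nonneg)
    define t where "t = root n (W / R)"
    have bounds: "m ^ n \<le> W / R" "W / R \<le> M ^ n"
      using lower upper \<open>R > 0\<close> by (simp_all add: pos_le_divide_eq pos_divide_le_eq)
    have "t ^ n = W / R"
      unfolding t_def using assms(2,3) bounds(1) by (simp add: order_trans[OF zero_le_power])
    moreover have "m \<le> t" "t \<le> M"
      using real_root_le_mono[OF assms(2) bounds(1)] real_root_le_mono[OF assms(2) bounds(2)]
        assms(2-4) by (simp_all add: t_def real_root_power_cancel)
    ultimately show ?thesis using \<open>R > 0\<close> by (auto simp: R_def W_def)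
  qed
qed

lemma det_scaled_mult_herm:
  fixes X :: "complex^'t::finite^'r::finite" and a :: "'r \<Rightarrow> complex" and b :: "'t \<Rightarrow> complex"
  defines "Y \<equiv> (\<chi> i j. a i * b j * X$i$j :: complex^'t^'r)"
  shows "\<exists>t::real. (MIN j. (cmod (b j))\<^sup>2) \<le> t \<and> t \<le> (MAX j. (cmod (b j))\<^sup>2) \<and>
     det (Y ** herm Y) = complex_of_real (\<Prod>i\<in>UNIV. (cmod (a i))\<^sup>2 * t) * det (X ** herm X)"
proof -
  define m where "m = (MIN j. (cmod (b j))\<^sup>2)"
  define M where "M = (MAX j. (cmod (b j))\<^sup>2)"
  define n where "n = CARD('r)"
  define A where "A = (\<Prod>i\<in>UNIV. (cmod (a i))\<^sup>2)"
  define w where "w f = (\<Prod>j\<in>UNIV. (cmod (b (f j)))\<^sup>2)" for f :: "'r \<Rightarrow> 't"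
  define c where "c f = (cmod (det (colsel X f)))\<^sup>2" for f :: "'r \<Rightarrow> 't"
  have m_le: "m \<le> (cmod (b j))\<^sup>2" and le_M: "(cmod (b j))\<^sup>2 \<le> M" for j
    unfolding m_def M_def by (auto intro: Min_le Max_ge)
  have "0 \<le> m" unfolding m_def by (subst Min_ge_iff) auto
  have "m ^ n \<le> w f \<and> w f \<le> M ^ n" for f
    using prod_mono[of UNIV "\<lambda>_. m" "\<lambda>j. (cmod (b (f j)))\<^sup>2"]
      prod_mono[of UNIV "\<lambda>j. (cmod (b (f j)))\<^sup>2" "\<lambda>_. M"] \<open>0 \<le> m\<close> m_le le_M
    by (simp add: w_def n_def)
  then obtain t where "m \<le> t" "t \<le> M" and mean: "(\<Sum>f\<in>UNIV. w f * c f) = t ^ n * (\<Sum>f\<in>UNIV. c f)"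
    using power_mean_value[of UNIV n m M w c] \<open>0 \<le> m\<close> m_le[of undefined] le_M[of undefined]
    by (auto simp: n_def c_def)
  have "(cmod (det (colsel Y f)))\<^sup>2 = A * (w f * c f)" for f
    unfolding Y_def det_colsel_scaled A_def w_def c_def
    by (simp add: norm_mult prod_norm[symmetric] power_mult_distrib prod_power_distrib)
  then have "of_nat (fact n) * det (Y ** herm Y) = complex_of_real (A * (\<Sum>f\<in>UNIV. w f * c f))"
    unfolding n_def fact_det_mult_herm by (simp add: sum_distrib_left)
  also have "\<dots> = complex_of_real (A * t ^ n) * (of_nat (fact n) * det (X ** herm X))"
    unfolding mean n_def fact_det_mult_herm by (simp add: c_def)
  finally have "det (Y ** herm Y) = complex_of_real (A * t ^ n) * det (X ** herm X)"
    by simp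
  moreover have "(\<Prod>i\<in>UNIV. (cmod (a i))\<^sup>2 * t) = A * t ^ n"
    by (simp add: A_def prod.distrib n_def)
  ultimately show ?thesis using \<open>m \<le> t\<close> \<open>t \<le> M\<close> unfolding m_def M_def by metis
qed

theorem theorem2:
  fixes g :: "complex^'r::finite" and h :: "complex^'t::finite"
    and \<Theta> :: "complex^'t^'r"
  assumes full_rank: "rank \<Theta> = min CARD('r) CARD('t)"
  defines "Hh \<equiv> hadamard (outer g h) \<Theta>"
  shows "(CARD('r) \<le> CARD('t) \<longrightarrow>
           (\<exists>\<epsilon> :: 'r \<Rightarrow> real.
              (\<forall>i. (MIN j. (cmod (h $ j))\<^sup>2) \<le> \<epsilon> i \<and> \<epsilon> i \<le> (MAX j. (cmod (h $ j))\<^sup>2)) \<and>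
              det (Hh ** herm Hh) =
                complex_of_real (\<Prod>i\<in>UNIV. (cmod (g $ i))\<^sup>2 * \<epsilon> i) * det (\<Theta> ** herm \<Theta>)))
       \<and> (CARD('t) \<le> CARD('r) \<longrightarrow>
           (\<exists>\<nu> :: 't \<Rightarrow> real.
              (\<forall>i. (MIN j. (cmod (g $ j))\<^sup>2) \<le> \<nu> i \<and> \<nu> i \<le> (MAX j. (cmod (g $ j))\<^sup>2)) \<and>
              det (herm Hh ** Hh) =
                complex_of_real (\<Prod>i\<in>UNIV. (cmod (h $ i))\<^sup>2 * \<nu> i) * det (herm \<Theta> ** \<Theta>)))"
proof -
  have Hh_scaled: "Hh = (\<chi> i j. g$i * h$j * \<Theta>$i$j)"
    by (simp add: Hh_def hadamard_def outer_def vec_eq_iff)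
  have herm_Hh_scaled: "herm Hh = (\<chi> i j. cnj (h$i) * cnj (g$j) * herm \<Theta> $i$j)"
    by (simp add: Hh_scaled herm_def vec_eq_iff)
  obtain \<epsilon> where "(MIN j. (cmod (h$j))\<^sup>2) \<le> \<epsilon>" "\<epsilon> \<le> (MAX j. (cmod (h$j))\<^sup>2)"
    "det (Hh ** herm Hh) = complex_of_real (\<Prod>i\<in>UNIV. (cmod (g$i))\<^sup>2 * \<epsilon>) * det (\<Theta> ** herm \<Theta>)"
    using det_scaled_mult_herm[where X=\<Theta> and a="\<lambda>i. g$i" and b="\<lambda>j. h$j"] unfolding Hh_scaled[symmetric] by blast
  moreover obtain \<nu> where "(MIN j. (cmod (g$j))\<^sup>2) \<le> \<nu>" "\<nu> \<le> (MAX j. (cmod (g$j))\<^sup>2)"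
    "det (herm Hh ** Hh) = complex_of_real (\<Prod>i\<in>UNIV. (cmod (h$i))\<^sup>2 * \<nu>) * det (herm \<Theta> ** \<Theta>)"
    using det_scaled_mult_herm[where X="herm \<Theta>" and a="\<lambda>i. cnj (h$i)" and b="\<lambda>j. cnj (g$j)"]
    unfolding herm_Hh_scaled[symmetric] by auto
  ultimately show ?thesis
    by (intro conjI impI exI[of _ "\<lambda>_. \<epsilon>"] exI[of _ "\<lambda>_. \<nu>"]) auto
qed

end
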